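(* Let $0 < a < b < 1$ be fixed constants. For odd $n$, let $f_n$ be the multilinear extension to $[-1,1]^n$ of the majority function $\mathrm{Maj}_n:\{\pm1\}^n\to\{\pm1\}$, and for an integer $d$ let $f_n^{\le d}=\sum_{S\subseteq[n],|S|\le d}\hat f_n(S)\prod_{i\in S}x_i$ be its truncation to degree at most $d$ in the monomial (standard Fourier) basis. Then there exists $\delta = \delta(a,b) \in (0,1)$ such that, for each $n$, there is $t^*_n\in [a,b]$ with $|f_n^{\le \lfloor\delta n\rfloor}(t^*_n \cdot \vec{1})| \ge \omega_n(1)$, i.e. $|f_n^{\le \lfloor\delta n\rfloor}(t^*_n \cdot \vec{1})|\to\infty$ as $n\to\infty$.
   Context: $\hat f_n(S)=\mathbb{E}_{x\sim\{\pm1\}^n}[\mathrm{Maj}_n(x)\prod_{i\in S}x_i]$ are the Fourier coefficients of majority under the uniform distribution, so that $f_n(x)=\sum_{S\subseteq[n]}\hat f_n(S)\prod_{i\in S}x_i$. $\vec 1$ is the all-ones vector in $\mathbb{R}^n$. *)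

theory Defs
  imports Complex_Main "HOL-Library.FuncSet"
begin

definition cube :: "nat \<Rightarrow> (nat \<Rightarrow> real) set" where
  "cube n = PiE {..<n} (\<lambda>_. {-1, 1})"

text \<open>Majority function Maj_n(x) = sgn(x_1 + ... + x_n) (n odd, so never 0).\<close>
definition Maj :: "nat \<Rightarrow> (nat \<Rightarrow> real) \<Rightarrow> real" where
  "Maj n x = sgn (\<Sum>i<n. x i)"

definition fourier_coeff :: "nat \<Rightarrow> nat set \<Rightarrow> real" where
  "fourier_coeff n S = (\<Sum>x\<in>cube n. Maj n x * (\<Prod>i\<in>S. x i)) / 2 ^ n"

definition maj_trunc :: "nat \<Rightarrow> nat \<Rightarrow> (nat \<Rightarrow> real) \<Rightarrow> real" where
  "maj_trunc n d y = (\<Sum>S\<in>{S. S \<subseteq> {..<n} \<and> card S \<le> d}. fourier_coeff n S * (\<Prod>i\<in>S. y i))"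

end

theory Submission
  imports Defs "HOL-Computational_Algebra.Polynomial"
begin

(* On the diagonal, 2^n f_n(t,...,t) = sum_x Maj(x) prod_i (1 + x_i t) is a polynomial Q_n(t),
   and truncating f_n to degree d truncates Q_n to degree d. Grouping the cube points by their
   number w of -1 entries expresses Q_n in the Bernstein basis with coefficients sgn(n - 2w); since
   these only jump in the middle, for n = 2m+1 the derivative is Q_n' = 2n C(2m,m) (1 - t^2)^m.
   So 2^n f_n^{<=d}(a,...,a) is Q_n(0) plus 2n C(2m,m) >= 2^n times the alternating sum
   sum_{2j<d} (-1)^j C(m,j) a^(2j+1)/(2j+1). For d <= a^2 n/12 every term of this sum is at least
   twice the previous one, so the sum is at least half its last term, which grows like 2^(d/2),
   while |Q_n(0)| <= 2^n. With delta = a^2/12 and t_n = a the truncations therefore tend to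
   infinity. *)

lemma card_cube: "card (cube n) = 2 ^ n"
  by (simp add: cube_def card_PiE numeral_2_eq_2)

lemma sum_Pow_card:
  fixes g :: "nat \<Rightarrow> 'a::comm_semiring_1"
  assumes "finite A"
  shows "(\<Sum>S\<in>Pow A. g (card S)) = (\<Sum>k\<le>card A. of_nat (card A choose k) * g k)"
proof -
  have "(\<Sum>S\<in>Pow A. g (card S)) = (\<Sum>k\<le>card A. \<Sum>S\<in>{S \<in> Pow A. card S = k}. g (card S))"
    using assms by (intro sum.group[symmetric]) (auto intro: card_mono)
  also have "\<dots> = (\<Sum>k\<le>card A. of_nat (card A choose k) * g k)"
    using n_subsets[OF assms] by (intro sum.cong) auto
  finally show ?thesis .
qed

lemma sum_lessThan_eq_sum_evens:
  fixes f :: "nat \<Rightarrow> 'a::comm_monoid_add"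
  assumes "\<And>k. odd k \<Longrightarrow> f k = 0"
  shows "(\<Sum>k<d. f k) = (\<Sum>j<(d+1) div 2. f (2*j))"
proof (induction d)
  case 0
  then show ?case by simp
next
  case (Suc d)
  show ?case
  proof (cases "even d")
    case True
    then have "(Suc d + 1) div 2 = Suc ((d+1) div 2)" "2 * ((d+1) div 2) = d"
      by presburger+
    then show ?thesis
      using Suc.IH by simp
  next
    case False
    then have "(Suc d + 1) div 2 = (d+1) div 2"
      by presburger
    then show ?thesis
      using Suc.IH assms[OF False] by simp
  qed
qed

lemma sum_cube_eq_sum_Pow:
  "(\<Sum>x\<in>cube n. F x) = (\<Sum>S\<in>Pow {..<n}. F (\<lambda>i\<in>{..<n}. if i \<in> S then -1 else 1))"
proof (rule sum.reindex_bij_witness[of _ "\<lambda>S. \<lambda>i\<in>{..<n}. if i \<in> S then -1 else 1"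
      "\<lambda>x. {i. i < n \<and> x i = -1}"])
  fix x assume "x \<in> cube n"
  then have "x \<in> extensional {..<n}" "\<And>i. i < n \<Longrightarrow> x i \<noteq> -1 \<Longrightarrow> x i = 1"
    by (auto simp: cube_def PiE_def)
  then show *: "(\<lambda>i\<in>{..<n}. if i \<in> {i. i < n \<and> x i = -1} then -1 else 1) = x"
    by (auto simp: extensional_def)
  show "{i. i < n \<and> x i = -1} \<in> Pow {..<n}"
    by auto
  show "F (\<lambda>i\<in>{..<n}. if i \<in> {i. i < n \<and> x i = -1} then -1 else 1) = F x"
    by (simp only: *)
next
  fix S assume "S \<in> Pow {..<n}"
  then show "{i. i < n \<and> (\<lambda>i\<in>{..<n}. if i \<in> S then -1 else 1) i = (-1::real)} = S"
    by auto
  show "(\<lambda>i\<in>{..<n}. if i \<in> S then -1 else 1) \<in> cube n"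
    by (simp add: cube_def)
qed

(* 2^N times the Bernstein polynomial b_{N,w}(x) = C(N,w) x^w (1-x)^(N-w) at x = (1-t)/2. *)
definition bernstein :: "nat \<Rightarrow> nat \<Rightarrow> real poly" where
  "bernstein N w = smult (of_nat (N choose w)) ([:1,1:]^(N - w) * [:1,-1:]^w)"

lemma sum_cube_prod_pCons_eq_sum_bernstein:
  fixes \<phi> :: "real \<Rightarrow> real"
  shows "(\<Sum>x\<in>cube n. smult (\<phi> (\<Sum>i<n. x i)) (\<Prod>i<n. [:1, x i:])) =
    (\<Sum>w\<le>n. smult (\<phi> (real n - 2 * real w)) (bernstein n w))"
proof -
  have signs: "(\<Sum>i<n. if i \<in> S then -1 else 1) = real n - 2 * real (card S)"
    "(\<Prod>i<n. [:1, if i \<in> S then -1 else 1:]) = [:1,1::real:]^(n - card S) * [:1,-1:]^card S"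
    if S: "S \<subseteq> {..<n}" for S
  proof -
    have "card S \<le> n" "card ({..<n} - S) = n - card S"
      "{..<n} \<inter> S = S" "{..<n} \<inter> - S = {..<n} - S"
      using S card_mono[OF _ S] by (auto simp: card_Diff_subset finite_subset[OF S])
    moreover have "(\<Prod>i<n. [:1, if i \<in> S then -1 else 1:]) =
        (\<Prod>i<n. if i \<in> S then [:1,-1:] else [:1,1::real:])"
      by (rule prod.cong) auto
    ultimately show "(\<Sum>i<n. if i \<in> S then -1 else 1) = real n - 2 * real (card S)"
      "(\<Prod>i<n. [:1, if i \<in> S then -1 else 1:]) = [:1,1::real:]^(n - card S) * [:1,-1:]^card S"
      by (simp_all add: sum.If_cases prod.If_cases of_nat_diff mult.commute)
  qed
  have "(\<Sum>x\<in>cube n. smult (\<phi> (\<Sum>i<n. x i)) (\<Prod>i<n. [:1, x i:])) =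
    (\<Sum>S\<in>Pow {..<n}. smult (\<phi> (real n - 2 * real (card S))) ([:1,1:]^(n - card S) * [:1,-1:]^card S))"
    unfolding sum_cube_eq_sum_Pow
  proof (rule sum.cong)
    fix S assume "S \<in> Pow {..<n}"
    then show "smult (\<phi> (\<Sum>i<n. (\<lambda>i\<in>{..<n}. if i \<in> S then -1 else 1) i))
        (\<Prod>i<n. [:1, (\<lambda>i\<in>{..<n}. if i \<in> S then -1 else 1) i:]) =
      smult (\<phi> (real n - 2 * real (card S))) ([:1,1:]^(n - card S) * [:1,-1:]^card S)"
      by (simp del: pCons_one add: signs[symmetric])
  qed simp
  also have "\<dots> = (\<Sum>w\<le>n. smult (\<phi> (real n - 2 * real w)) (bernstein n w))"
    by (subst sum_Pow_card) (simp_all add: bernstein_def of_nat_poly mult.commute)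
  finally show ?thesis .
qed

lemma pderiv_sum: "pderiv (\<Sum>x\<in>S. f x) = (\<Sum>x\<in>S. pderiv (f x))"
  using higher_pderiv_sum[of 1 f S] by simp

lemma smult_sum_right: "smult c (\<Sum>x\<in>S. f x) = (\<Sum>x\<in>S. smult c (f x))"
  by (induction S rule: infinite_finite_induct) (simp_all add: smult_add_right)

lemma bernstein_eq_0: "N < w \<Longrightarrow> bernstein N w = 0"
  by (simp add: bernstein_def)

lemma pderiv_bernstein:
  "pderiv (bernstein (Suc N) w) =
    smult (of_nat (Suc N)) (bernstein N w - (if w = 0 then 0 else bernstein N (w - 1)))"
proof -
  define A B :: "real poly" where "A = [:1,1:]" and "B = [:1,-1:]"
  have "pderiv A = 1" "pderiv B = -1"
    by (simp_all add: A_def B_def pderiv_pCons one_pCons)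
  then have d: "pderiv (A^(Suc N - w) * B^w) =
      smult (of_nat (Suc N - w)) (A^(N - w) * B^w) - smult (of_nat w) (A^(Suc N - w) * B^(w - 1))"
    by (simp add: pderiv_mult pderiv_power Suc_diff_le algebra_simps)
  show ?thesis
  proof (cases w)
    case 0
    then show ?thesis
      using d by (simp add: bernstein_def pderiv_smult flip: A_def B_def)
  next
    case (Suc v)
    have "real (Suc N choose Suc v) * real (N - v) = real (Suc N) * real (N choose Suc v)"
      by (metis binomial_absorb_comp diff_Suc_1 diff_Suc_Suc mult.commute of_nat_mult)
    moreover have "real (Suc N choose Suc v) * real (Suc v) = real (Suc N) * real (N choose v)"
      by (metis Suc_times_binomial mult.commute of_nat_mult)
    ultimately show ?thesis
      using d by (simp add: Suc bernstein_def pderiv_smult smult_diff_right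
          del: binomial_Suc_Suc of_nat_Suc flip: A_def B_def)
  qed
qed

lemma pderiv_sum_bernstein:
  fixes s :: "nat \<Rightarrow> real"
  shows "pderiv (\<Sum>w\<le>Suc N. smult (s w) (bernstein (Suc N) w)) =
    smult (of_nat (Suc N)) (\<Sum>w\<le>N. smult (s w - s (Suc w)) (bernstein N w))"
proof -
  have "pderiv (\<Sum>w\<le>Suc N. smult (s w) (bernstein (Suc N) w)) =
      (\<Sum>w\<le>Suc N. smult (of_nat (Suc N)) (smult (s w) (bernstein N w) -
        (if w = 0 then 0 else smult (s w) (bernstein N (w - 1)))))"
    unfolding pderiv_sum pderiv_smult
    by (intro sum.cong) (auto simp: pderiv_bernstein smult_diff_right mult.commute)
  also have "\<dots> = smult (of_nat (Suc N)) ((\<Sum>w\<le>Suc N. smult (s w) (bernstein N w)) -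
      (\<Sum>w\<le>Suc N. if w = 0 then 0 else smult (s w) (bernstein N (w - 1))))"
    by (simp only: smult_sum_right[symmetric] sum_subtractf)
  also have "(\<Sum>w\<le>Suc N. smult (s w) (bernstein N w)) = (\<Sum>w\<le>N. smult (s w) (bernstein N w))"
    by (simp add: bernstein_eq_0)
  also have "(\<Sum>w\<le>Suc N. if w = 0 then 0 else smult (s w) (bernstein N (w - 1))) =
      (\<Sum>w\<le>N. smult (s (Suc w)) (bernstein N w))"
    by (subst sum.atMost_Suc_shift) simp
  finally show ?thesis
    by (simp add: smult_diff_left sum_subtractf)
qed

lemma prod_monom_Suc_0: "(\<Prod>i\<in>S. monom (c i) (Suc 0)) = monom (\<Prod>i\<in>S. c i) (card S)"
  by (induction S rule: infinite_finite_induct) (auto simp: mult_monom)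

lemma prod_pCons_1_eq_sum_Pow:
  assumes "finite I"
  shows "(\<Prod>i\<in>I. [:1, c i:]) = (\<Sum>S\<in>Pow I. monom (\<Prod>i\<in>S. c i) (card S))"
proof -
  have "(\<Prod>i\<in>I. [:1, c i:]) = (\<Prod>i\<in>I. monom (c i) (Suc 0) + 1)"
    by (rule prod.cong) (auto simp: monom_Suc one_pCons monom_0)
  also have "\<dots> = (\<Sum>S\<in>Pow I. monom (\<Prod>i\<in>S. c i) (card S))"
    by (simp add: prod_add[OF assms] prod_monom_Suc_0)
  finally show ?thesis .
qed

lemma sum_coeff_prod_pCons_1:
  fixes c :: "nat \<Rightarrow> real"
  assumes "finite I"
  shows "(\<Sum>k\<le>d. coeff (\<Prod>i\<in>I. [:1, c i:]) k * t^k) =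
         (\<Sum>S\<in>{S. S \<subseteq> I \<and> card S \<le> d}. (\<Prod>i\<in>S. c i) * t^card S)"
proof -
  have "(\<Sum>k\<le>d. coeff (\<Prod>i\<in>I. [:1, c i:]) k * t^k) =
        (\<Sum>S\<in>Pow I. \<Sum>k\<le>d. if card S = k then (\<Prod>i\<in>S. c i) * t^card S else 0)"
    unfolding prod_pCons_1_eq_sum_Pow[OF assms] coeff_sum coeff_monom sum_distrib_right
    by (subst sum.swap) (intro sum.cong, auto)
  also have "\<dots> = (\<Sum>S\<in>{S. S \<subseteq> I \<and> card S \<le> d}. (\<Prod>i\<in>S. c i) * t^card S)"
    using assms by (simp add: sum.delta sum.inter_filter[symmetric] Collect_conj_eq Pow_def)
  finally show ?thesis .
qed

(* 2^n f_n(t,...,t) as a polynomial in t: its coefficient of t^k is 2^n times the sum of the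
   Fourier coefficients of f_n over all |S| = k. *)
definition maj_diag_poly :: "nat \<Rightarrow> real poly" where
  "maj_diag_poly n = (\<Sum>x\<in>cube n. smult (Maj n x) (\<Prod>i<n. [:1, x i:]))"

lemma maj_trunc_const_eq:
  "maj_trunc n d (\<lambda>_. t) * 2^n = (\<Sum>k\<le>d. coeff (maj_diag_poly n) k * t^k)"
proof -
  let ?F = "{S. S \<subseteq> {..<n} \<and> card S \<le> d}"
  have "maj_trunc n d (\<lambda>_. t) * 2^n = (\<Sum>S\<in>?F. (\<Sum>x\<in>cube n. Maj n x * (\<Prod>i\<in>S. x i)) * t^card S)"
    unfolding maj_trunc_def fourier_coeff_def by (simp add: sum_distrib_right sum_divide_distrib)
  also have "\<dots> = (\<Sum>x\<in>cube n. Maj n x * (\<Sum>S\<in>?F. (\<Prod>i\<in>S. x i) * t^card S))"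
    by (simp add: sum_distrib_right sum_distrib_left mult.assoc sum.swap[of _ ?F])
  also have "\<dots> = (\<Sum>x\<in>cube n. Maj n x * (\<Sum>k\<le>d. coeff (\<Prod>i<n. [:1, x i:]) k * t^k))"
    by (simp add: sum_coeff_prod_pCons_1)
  also have "\<dots> = (\<Sum>k\<le>d. coeff (maj_diag_poly n) k * t^k)"
    unfolding maj_diag_poly_def coeff_sum
    by (simp add: sum_distrib_right sum_distrib_left mult.assoc sum.swap[of _ "{..d}"])
  finally show ?thesis .
qed

lemma maj_diag_poly_eq_sum_bernstein:
  "maj_diag_poly n = (\<Sum>w\<le>n. smult (sgn (real n - 2 * real w)) (bernstein n w))"
  unfolding maj_diag_poly_def Maj_def by (rule sum_cube_prod_pCons_eq_sum_bernstein)

lemma bernstein_central: "bernstein (2*m) m = smult (of_nat (2*m choose m)) ([:1,0,-1:]^m)"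
proof -
  have "[:1,1:] * [:1,-1:] = [:1,0,-1::real:]"
    by simp
  then show ?thesis
    by (simp add: bernstein_def mult_2 power_mult_distrib[symmetric])
qed

lemma pderiv_maj_diag_poly:
  "pderiv (maj_diag_poly (2*m+1)) = smult (2 * of_nat (2*m+1) * of_nat (2*m choose m)) ([:1,0,-1:]^m)"
proof -
  define s where "s w = sgn (real (Suc (2*m)) - 2 * real w)" for w
  \<comment> \<open>s jumps only from w = m to w = m + 1, so a single Bernstein term survives\<close>
  have "pderiv (maj_diag_poly (Suc (2*m))) =
      smult (of_nat (Suc (2*m))) (\<Sum>w\<le>2*m. smult (s w - s (Suc w)) (bernstein (2*m) w))"
    unfolding maj_diag_poly_eq_sum_bernstein s_def[symmetric] by (rule pderiv_sum_bernstein)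
  also have "(\<Sum>w\<le>2*m. smult (s w - s (Suc w)) (bernstein (2*m) w)) =
      (\<Sum>w\<le>2*m. if w = m then smult 2 (bernstein (2*m) m) else 0)"
    by (intro sum.cong) (auto simp: s_def sgn_if)
  finally show ?thesis
    by (simp add: bernstein_central, simp add: algebra_simps)
qed

lemma coeff_one_minus_X2_power:
  "coeff ([:1,0,-1::real:]^m) (2*j) = (-1)^j * of_nat (m choose j)"
  "coeff ([:1,0,-1::real:]^m) (Suc (2*j)) = 0"
proof -
  have "[:1,0,-1::real:] = monom (-1) 2 + 1"
    by (simp add: monom_altdef numeral_2_eq_2 one_pCons)
  then have "[:1,0,-1::real:]^m = (\<Sum>i\<le>m. monom ((-1)^i * of_nat (m choose i)) (2*i))"
    by (simp add: binomial_ring monom_power of_nat_monom mult_monom mult.commute)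
  moreover have "2 * i \<noteq> Suc (2 * j)" for i
    by presburger
  ultimately show "coeff ([:1,0,-1::real:]^m) (2*j) = (-1)^j * of_nat (m choose j)"
    "coeff ([:1,0,-1::real:]^m) (Suc (2*j)) = 0"
    by (auto simp: coeff_sum coeff_monom binomial_eq_0 sum.delta)
qed

lemma coeff_maj_diag_poly_odd:
  "coeff (maj_diag_poly (2*m+1)) (Suc (2*j)) =
    2 * of_nat (2*m+1) * of_nat (2*m choose m) * ((-1)^j * of_nat (m choose j) / of_nat (2*j+1))"
proof -
  have "of_nat (Suc (2*j)) * coeff (maj_diag_poly (2*m+1)) (Suc (2*j)) =
      2 * of_nat (2*m+1) * of_nat (2*m choose m) * ((-1)^j * of_nat (m choose j))"
    by (simp only: coeff_pderiv[symmetric] pderiv_maj_diag_poly coeff_smult coeff_one_minus_X2_power)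
  then show ?thesis
    by (simp add: field_simps)
qed

lemma coeff_maj_diag_poly_even:
  "coeff (maj_diag_poly (2*m+1)) (Suc (Suc (2*j))) = 0"
proof -
  have "of_nat (Suc (Suc (2*j))) * coeff (maj_diag_poly (2*m+1)) (Suc (Suc (2*j))) = 0"
    by (simp only: coeff_pderiv[symmetric] pderiv_maj_diag_poly coeff_smult coeff_one_minus_X2_power
        mult_zero_right)
  then show ?thesis
    by simp
qed

lemma maj_trunc_odd_diag:
  "maj_trunc (2*m+1) d (\<lambda>_. t) * 2^(2*m+1) = coeff (maj_diag_poly (2*m+1)) 0 +
     2 * of_nat (2*m+1) * of_nat (2*m choose m) *
       (\<Sum>j<(d+1) div 2. (-1)^j * (of_nat (m choose j) * t^(2*j+1) / of_nat (2*j+1)))"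
proof -
  let ?Q = "maj_diag_poly (2*m+1)"
  have "maj_trunc (2*m+1) d (\<lambda>_. t) * 2^(2*m+1) = (\<Sum>k\<le>d. coeff ?Q k * t^k)"
    by (rule maj_trunc_const_eq)
  also have "\<dots> = coeff ?Q 0 + (\<Sum>k<d. coeff ?Q (Suc k) * t^Suc k)"
    by (subst sum.atMost_shift) simp_all
  also have "(\<Sum>k<d. coeff ?Q (Suc k) * t^Suc k) = (\<Sum>j<(d+1) div 2. coeff ?Q (Suc (2*j)) * t^Suc (2*j))"
  proof (rule sum_lessThan_eq_sum_evens)
    fix k :: nat
    assume "odd k"
    then obtain j where "Suc k = Suc (Suc (2*j))"
      by (auto elim: oddE)
    then show "coeff ?Q (Suc k) * t^Suc k = 0"
      by (simp only: coeff_maj_diag_poly_even mult_zero_left)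
  qed
  also have "\<dots> = 2 * of_nat (2*m+1) * of_nat (2*m choose m) *
      (\<Sum>j<(d+1) div 2. (-1)^j * (of_nat (m choose j) * t^(2*j+1) / of_nat (2*j+1)))"
    unfolding coeff_maj_diag_poly_odd sum_distrib_left by (intro sum.cong) simp_all
  finally show ?thesis .
qed

lemma abs_coeff_maj_diag_poly_0: "\<bar>coeff (maj_diag_poly n) 0\<bar> \<le> 2^n"
proof -
  have "coeff (maj_diag_poly n) 0 = (\<Sum>x\<in>cube n. Maj n x)"
    by (simp add: maj_diag_poly_def poly_sum poly_prod flip: poly_0_coeff_0)
  also have "\<bar>\<dots>\<bar> \<le> (\<Sum>x\<in>cube n. \<bar>Maj n x\<bar>)"
    by (rule sum_abs)
  also have "\<dots> \<le> (\<Sum>x\<in>cube n. 1)"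
    by (rule sum_mono) (simp add: Maj_def sgn_if)
  finally show ?thesis
    by (simp add: card_cube)
qed

lemma four_power_le_central_binomial: "4^m \<le> (2*m+1) * (2*m choose m)"
proof -
  have "4^m = (\<Sum>k\<le>2*m. 2*m choose k)"
    by (simp add: choose_row_sum power_mult)
  also have "\<dots> \<le> (\<Sum>k\<le>2*m. 2*m choose m)"
    by (intro sum_mono binomial_maximum')
  finally show ?thesis
    by simp
qed

lemma abs_maj_trunc_ge_alternating_sum:
  "\<bar>\<Sum>j<(d+1) div 2. (-1)^j * (of_nat (m choose j) * t^(2*j+1) / of_nat (2*j+1))\<bar> - 1
     \<le> \<bar>maj_trunc (2*m+1) d (\<lambda>_. t)\<bar>"
proof -
  define \<Sigma> where "\<Sigma> = (\<Sum>j<(d+1) div 2. (-1)^j * (of_nat (m choose j) * t^(2*j+1) / of_nat (2*j+1)))"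
  define c :: real where "c = 2 * of_nat (2*m+1) * of_nat (2*m choose m)"
  have "(2::real)^(2*m+1) = of_nat (2 * 4^m)"
    by (simp add: power_mult)
  also have "\<dots> \<le> of_nat (2 * ((2*m+1) * (2*m choose m)))"
    using four_power_le_central_binomial[of m] by (simp only: of_nat_le_iff)
  also have "\<dots> = c"
    by (simp add: c_def algebra_simps)
  finally have c: "2^(2*m+1) \<le> c" .
  have "2^(2*m+1) * \<bar>\<Sigma>\<bar> - 2^(2*m+1) \<le> c * \<bar>\<Sigma>\<bar> - \<bar>coeff (maj_diag_poly (2*m+1)) 0\<bar>"
    using c abs_coeff_maj_diag_poly_0[of "2*m+1"] by (intro diff_mono mult_right_mono) auto
  also have "\<dots> \<le> \<bar>coeff (maj_diag_poly (2*m+1)) 0 + c * \<Sigma>\<bar>"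
    using c by (simp add: abs_mult abs_triangle_ineq3)
  also have "\<dots> = \<bar>maj_trunc (2*m+1) d (\<lambda>_. t) * 2^(2*m+1)\<bar>"
    by (simp only: maj_trunc_odd_diag c_def \<Sigma>_def)
  also have "\<dots> = 2^(2*m+1) * \<bar>maj_trunc (2*m+1) d (\<lambda>_. t)\<bar>"
    by (simp add: abs_mult)
  finally have "2^(2*m+1) * (\<bar>\<Sigma>\<bar> - 1) \<le> 2^(2*m+1) * \<bar>maj_trunc (2*m+1) d (\<lambda>_. t)\<bar>"
    by (simp only: right_diff_distrib mult_1_right)
  then show ?thesis
    unfolding \<Sigma>_def[symmetric] by (rule mult_left_le_imp_le) simp
qed

lemma alternating_sum_doubling:
  fixes u :: "nat \<Rightarrow> real"
  assumes "0 \<le> u 0" and "\<And>j. j < J \<Longrightarrow> 2 * u j \<le> u (Suc j)"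
  shows "u J / 2 \<le> (-1)^J * (\<Sum>j\<le>J. (-1)^j * u j) \<and>
    (-1)^J * (\<Sum>j\<le>J. (-1)^j * u j) \<le> u J"
  using assms(2)
proof (induction J)
  case 0
  then show ?case
    using assms(1) by simp
next
  case (Suc J)
  define S where "S = (-1)^J * (\<Sum>j\<le>J. (-1)^j * u j)"
  have S: "u J / 2 \<le> S" "S \<le> u J" and step: "2 * u J \<le> u (Suc J)"
    using Suc by (auto simp: S_def)
  have "(-1)^Suc J * (\<Sum>j\<le>Suc J. (-1)^j * u j) = u (Suc J) - S"
    by (simp add: S_def algebra_simps)
  then show ?case
    using S step by simp
qed

lemma doubling_growth:
  fixes u :: "nat \<Rightarrow> real"
  assumes "\<And>j. j < J \<Longrightarrow> 2 * u j \<le> u (Suc j)"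
  shows "2^J * u 0 \<le> u J"
  using assms
proof (induction J)
  case (Suc J)
  then have "2^J * u 0 \<le> u J" "2 * u J \<le> u (Suc J)"
    by simp_all
  then show ?case
    by simp
qed simp

lemma binomial_term_doubling:
  fixes a :: real
  assumes a: "0 < a" "a \<le> 1" and i: "24 * real (Suc i) < a^2 * real (2*m+1)"
  shows "2 * (real (m choose i) * a^(2*i+1) / real (2*i+1)) \<le>
    real (m choose Suc i) * a^(2*Suc i+1) / real (2*Suc i+1)"
proof -
  define r d c0 c1 P where "r = real i" and "d = real (m - i)"
    and "c0 = real (m choose i)" and "c1 = real (m choose Suc i)" and "P = a^(2*i+1)"
  have "a^2 * real (2*m+1) \<le> real (2*m+1)"
    using a by (simp add: mult_left_le_one_le power_le_one)
  then have "24 * real (Suc i) < real (2*m+1)"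
    using i by linarith
  then have "real (2*m+1) \<le> 4 * d"
    unfolding d_def by (simp add: of_nat_diff)
  then have "a^2 * real (2*m+1) \<le> 4 * (d * a^2)"
    using mult_right_mono[of "real (2*m+1)" "4 * d" "a^2"] by (simp add: mult_ac)
  with i have "6 * (r + 1) \<le> d * a^2"
    unfolding r_def by simp
  have "0 \<le> r" "0 \<le> c0" "0 \<le> P"
    using a by (simp_all add: r_def c0_def P_def)
  have binom: "c1 * (r + 1) = c0 * d"
    unfolding c0_def c1_def r_def d_def
    by (metis binomial_absorb_comp binomial_absorption mult.commute of_nat_mult of_nat_Suc add.commute)
  \<comment> \<open>the ratio of consecutive terms is d a^2 (2r + 1) / ((r + 1) (2r + 3))\<close>
  have "2 * (2 * r + 3) * (r + 1) \<le> 6 * (r + 1) * (2 * r + 1)"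
    using \<open>0 \<le> r\<close> by (simp add: algebra_simps)
  also have "\<dots> \<le> d * a^2 * (2 * r + 1)"
    using \<open>6 * (r + 1) \<le> d * a^2\<close> \<open>0 \<le> r\<close> by (intro mult_right_mono) simp_all
  finally have "c0 * P * (2 * (2 * r + 3) * (r + 1)) \<le> c0 * P * (d * a^2 * (2 * r + 1))"
    using \<open>0 \<le> c0\<close> \<open>0 \<le> P\<close> by (intro mult_left_mono) simp_all
  also have "c0 * P * (d * a^2 * (2 * r + 1)) = (c1 * (r + 1)) * (P * a^2 * (2 * r + 1))"
    by (simp only: binom mult_ac)
  finally have "2 * (c0 * P) * (2 * r + 3) * (r + 1) \<le> c1 * (P * a^2) * (2 * r + 1) * (r + 1)"
    by (simp only: mult_ac)
  then have "2 * (c0 * P) * (2 * r + 3) \<le> c1 * (P * a^2) * (2 * r + 1)"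
    using \<open>0 \<le> r\<close> by (simp add: mult_le_cancel_right)
  then have "2 * (c0 * P / (2 * r + 1)) \<le> c1 * (P * a^2) / (2 * r + 3)"
    using \<open>0 \<le> r\<close> by (simp add: field_simps)
  moreover have "real (2*i+1) = 2 * r + 1" "real (2*Suc i+1) = 2 * r + 3" "a^(2*Suc i+1) = P * a^2"
    by (simp_all add: r_def P_def flip: power_add)
  ultimately show ?thesis
    unfolding c0_def c1_def P_def by (simp only:)
qed

lemma alternating_binomial_sum_ge:
  fixes a :: real
  assumes a: "0 < a" "a \<le> 1" and J: "24 * real J < a^2 * real (2*m+1)"
  shows "a * real (Suc J) / 2 \<le>
    \<bar>\<Sum>j\<le>J. (-1)^j * (real (m choose j) * a^(2*j+1) / real (2*j+1))\<bar>"
proof -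
  define u where "u j = real (m choose j) * a^(2*j+1) / real (2*j+1)" for j
  have doubling: "2 * u j \<le> u (Suc j)" if "j < J" for j
  proof -
    have "24 * real (Suc j) \<le> 24 * real J"
      using that by simp
    then have "24 * real (Suc j) < a^2 * real (2*m+1)"
      using J by (rule le_less_trans)
    then show ?thesis
      unfolding u_def by (rule binomial_term_doubling[OF a])
  qed
  have "u 0 = a"
    by (simp add: u_def)
  have "real (Suc J) \<le> 2^J"
    by (metis Suc_leI less_exp of_nat_le_iff of_nat_numeral of_nat_power)
  then have "a * real (Suc J) / 2 \<le> 2^J * u 0 / 2"
    using a by (simp add: \<open>u 0 = a\<close> mult.commute mult_right_mono)
  also have "\<dots> \<le> u J / 2"
    using doubling_growth[of J u] doubling by simp
  also have "\<dots> \<le> (-1)^J * (\<Sum>j\<le>J. (-1)^j * u j)"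
    using alternating_sum_doubling[of u J] doubling a \<open>u 0 = a\<close> by simp
  also have "\<dots> \<le> \<bar>\<Sum>j\<le>J. (-1)^j * u j\<bar>"
    using abs_ge_self[of "(-1)^J * (\<Sum>j\<le>J. (-1)^j * u j)"]
    by (simp only: abs_mult power_abs abs_neg_one power_one mult_1_left)
  finally show ?thesis
    by (simp add: u_def)
qed

lemma abs_maj_trunc_ge_degree:
  fixes a :: real
  assumes a: "0 < a" "a \<le> 1" and d: "12 * real d \<le> a^2 * real (2*m+1)"
  shows "a * real d / 4 - 1 \<le> \<bar>maj_trunc (2*m+1) d (\<lambda>_. a)\<bar>"
proof (cases "d = 0")
  case True
  then show ?thesis
    by simp
next
  case False
  define J where "J = (d+1) div 2 - 1"
  have L: "(d+1) div 2 = Suc J"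
    using False by (simp add: J_def)
  then have "2 * J + 1 \<le> d" "d \<le> 2 * Suc J"
    by presburger+
  then have "24 * real J < a^2 * real (2*m+1)" and "a * real d / 4 \<le> a * real (Suc J) / 2"
    using d a by (simp_all add: mult_left_mono flip: of_nat_le_iff)
  then have "a * real d / 4 \<le>
      \<bar>\<Sum>j<(d+1) div 2. (-1)^j * (real (m choose j) * a^(2*j+1) / real (2*j+1))\<bar>"
    unfolding L lessThan_Suc_atMost using alternating_binomial_sum_ge[OF a] by (meson order_trans)
  then show ?thesis
    using abs_maj_trunc_ge_alternating_sum[where d = d and m = m and t = a] by linarith
qed

lemma filterlim_abs_maj_trunc_at_top:
  fixes a :: real
  assumes a: "0 < a" "a \<le> 1"
  shows "filterlim (\<lambda>k. \<bar>maj_trunc (2*k+1) (nat \<lfloor>a^2/12 * real (2*k+1)\<rfloor>) (\<lambda>_. a)\<bar>)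
    at_top sequentially"
proof -
  define \<delta> where "\<delta> = a^2 / 12"
  have "0 < \<delta>"
    using a by (simp add: \<delta>_def)
  have lower: "a * (\<delta> * real (2*k+1) - 1) / 4 - 1
      \<le> \<bar>maj_trunc (2*k+1) (nat \<lfloor>\<delta> * real (2*k+1)\<rfloor>) (\<lambda>_. a)\<bar>" for k
  proof -
    define d where "d = nat \<lfloor>\<delta> * real (2*k+1)\<rfloor>"
    have "\<delta> * real (2*k+1) - 1 \<le> real d" "real d \<le> \<delta> * real (2*k+1)"
      using \<open>0 < \<delta>\<close> by (simp_all add: d_def)
    then have "a * (\<delta> * real (2*k+1) - 1) / 4 - 1 \<le> a * real d / 4 - 1"
      using a by (simp add: mult_left_mono divide_right_mono)
    also have "\<dots> \<le> \<bar>maj_trunc (2*k+1) d (\<lambda>_. a)\<bar>"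
      using \<open>real d \<le> \<delta> * real (2*k+1)\<close> by (intro abs_maj_trunc_ge_degree a) (simp add: \<delta>_def)
    finally show ?thesis
      by (simp add: d_def)
  qed
  have "(\<lambda>k. a * (\<delta> * real (2*k+1) - 1) / 4 - 1) =
      (\<lambda>k. (a * (\<delta> - 1) / 4 - 1) + (a * \<delta> / 2) * real k)"
    by (simp add: fun_eq_iff field_simps)
  moreover have "filterlim (\<lambda>k. (a * (\<delta> - 1) / 4 - 1) + (a * \<delta> / 2) * real k) at_top sequentially"
    using a \<open>0 < \<delta>\<close> by (intro filterlim_tendsto_add_at_top[OF tendsto_const]
        filterlim_tendsto_pos_mult_at_top[OF tendsto_const _ filterlim_real_sequentially]) simp
  ultimately have "filterlim (\<lambda>k. a * (\<delta> * real (2*k+1) - 1) / 4 - 1) at_top sequentially"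
    by simp
  then show ?thesis
    unfolding \<delta>_def[symmetric] by (rule filterlim_at_top_mono) (intro always_eventually allI lower)
qed

theorem mainTheorem8:
  fixes a b :: real
  assumes "0 < a" "a < b" "b < 1"
  shows "\<exists>\<delta>::real. 0 < \<delta> \<and> \<delta> < 1 \<and>
    (\<exists>t :: nat \<Rightarrow> real. (\<forall>n. odd n \<longrightarrow> a \<le> t n \<and> t n \<le> b) \<and>
      filterlim (\<lambda>k. \<bar>maj_trunc (2*k+1) (nat \<lfloor>\<delta> * real (2*k+1)\<rfloor>) (\<lambda>_. t (2*k+1))\<bar>)
        at_top sequentially)"
proof -
  have a: "0 < a" "a \<le> 1"
    using assms by auto
  then have "a^2 / 12 < 1"
    using power_le_one[of a 2] by simp
  then show ?thesis
    using assms filterlim_abs_maj_trunc_at_top[OF a]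
    by (intro exI[of _ "a^2 / 12"] conjI exI[of _ "\<lambda>_. a"]) auto
qed

end
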